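(* The operator $\log S^t=\sum_{k=1}^\infty\frac{(-1)^{k-1}}{k}(S^t-1)^k$ is well defined on $\mathfrak{h}^1[t]$ (on each word only finitely many terms are nonzero), and for every word $w$ of length $n$, \[(\log S^t)(w)=t\sum_{r\in R_n,\ \sigma(r)=1}\mathrm{Con}_r(w)=t\,(\log S)(w),\] where $S=S^1$ is obtained by substituting $t=1$.
   Context: Let $\mathfrak{A}$ be a commutative $\mathbb{Q}$-algebra, $A$ a set of letters, and $\mathfrak{h}^1$ the non-commutative polynomial algebra over $\mathfrak{A}$ in the letters of $A$ (the free $\mathfrak{A}$-module on words, i.e. finite sequences of letters including the empty word $1$, with concatenation product). Let $\mathfrak{z}\subset\mathfrak{h}^1$ be the $\mathfrak{A}$-submodule spanned by $A$, and assume $\mathfrak{z}$ carries a commutative associative (not necessarily unital) $\mathfrak{A}$-bilinear product $\circ\colon\mathfrak{z}\times\mathfrak{z}\to\mathfrak{z}$. This is extended to an action of $\mathfrak{z}$ on $\mathfrak{h}^1$ by $a\circ 1=0$ and $a\circ(bw)=(a\circ b)w$ for $a,b\in A$ and words $w$, extended $\mathfrak{A}$-bilinearly. Let $t$ be an indeterminate, $\mathfrak{h}^1[t]=\mathfrak{h}^1\otimes_{\mathbb{Q}}\mathbb{Q}[t]$, with all structures extended $\mathfrak{A}[t]$-linearly. Define the $\mathfrak{A}[t]$-linear operator $S^t$ on $\mathfrak{h}^1[t]$ by $S^t(1)=1$ and $S^t(aw)=aS^t(w)+t\,a\circ S^t(w)$ for $a\in A$ and words $w$; for an element $\alpha$ of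 a commutative $\mathfrak{A}$-algebra, $S^\alpha$ denotes the operator obtained by substituting $\alpha$ for $t$. For $n\geq 0$, let $R_n$ be the set of strictly increasing sequences $r=(r_0,\ldots,r_s)$ of integers in $\{0,\ldots,n\}$ with $r_0=0$, $r_s=n$; put $\sigma(r)=n-s$. For a word $w=a_1\cdots a_n$, $\mathrm{Con}_r(w)=b_1\cdots b_s$ with $b_i=a_{r_{i-1}+1}\circ\cdots\circ a_{r_i}$. *)

theory Defs
  imports "HOL-Library.Poly_Mapping" "HOL-Computational_Algebra.Polynomial"
begin

text \<open>Elements of the free module over a coefficient ring 'b with basis 'k are
  finitely supported maps 'k =>0 'b. Words are lists of letters; letters are the
  elements of the type 'a. h1 = ('a list =>0 'r), h1[t] = ('a list =>0 'r poly),
  z = ('a =>0 'r).\<close>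

definition smultp :: "'b::comm_ring_1 \<Rightarrow> ('k \<Rightarrow>\<^sub>0 'b) \<Rightarrow> ('k \<Rightarrow>\<^sub>0 'b)" where
  "smultp c p = Poly_Mapping.map (\<lambda>x. c * x) p"

definition linext :: "('k \<Rightarrow> ('m \<Rightarrow>\<^sub>0 'b::comm_ring_1)) \<Rightarrow> ('k \<Rightarrow>\<^sub>0 'b) \<Rightarrow> ('m \<Rightarrow>\<^sub>0 'b)" where
  "linext f x = (\<Sum>k\<in>Poly_Mapping.keys x. smultp (Poly_Mapping.lookup x k) (f k))"

text \<open>Bilinear extension to z of the product of letters
  (circ a b is the element a \<circ> b of z).\<close>
definition circZ :: "('a \<Rightarrow> 'a \<Rightarrow> ('a \<Rightarrow>\<^sub>0 'r::comm_ring_1)) \<Rightarrow> ('a \<Rightarrow>\<^sub>0 'r) \<Rightarrow> ('a \<Rightarrow>\<^sub>0 'r) \<Rightarrow> ('a \<Rightarrow>\<^sub>0 'r)" where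
  "circZ circ x y = linext (\<lambda>a. linext (\<lambda>b. circ a b) y) x"

text \<open>Coefficient extension along a ring map \<iota> (\<iota> = id for h1, \<iota> = constant
  polynomial for h1[t]).\<close>
definition embedc :: "('r::zero \<Rightarrow> 'b::zero) \<Rightarrow> ('k \<Rightarrow>\<^sub>0 'r) \<Rightarrow> ('k \<Rightarrow>\<^sub>0 'b)" where
  "embedc \<iota> x = Poly_Mapping.map \<iota> x"

definition circW :: "('a \<Rightarrow> 'a \<Rightarrow> ('a \<Rightarrow>\<^sub>0 'r::comm_ring_1)) \<Rightarrow> ('r \<Rightarrow> 'b::comm_ring_1) \<Rightarrow> 'a
     \<Rightarrow> ('a list \<Rightarrow>\<^sub>0 'b) \<Rightarrow> ('a list \<Rightarrow>\<^sub>0 'b)" where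
  "circW circ \<iota> a x = linext (\<lambda>u. case u of [] \<Rightarrow> 0
       | b # v \<Rightarrow> linext (\<lambda>c. Poly_Mapping.single (c # v) 1) (embedc \<iota> (circ a b))) x"

definition prepend :: "'a \<Rightarrow> ('a list \<Rightarrow>\<^sub>0 'b::comm_ring_1) \<Rightarrow> ('a list \<Rightarrow>\<^sub>0 'b)" where
  "prepend a x = linext (\<lambda>u. Poly_Mapping.single (a # u) 1) x"

fun Sword :: "('a \<Rightarrow> 'a \<Rightarrow> ('a \<Rightarrow>\<^sub>0 'r::comm_ring_1)) \<Rightarrow> ('r \<Rightarrow> 'b::comm_ring_1) \<Rightarrow> 'b
     \<Rightarrow> 'a list \<Rightarrow> ('a list \<Rightarrow>\<^sub>0 'b)" where
  "Sword circ \<iota> \<alpha> [] = Poly_Mapping.single [] 1"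
| "Sword circ \<iota> \<alpha> (a # w) = prepend a (Sword circ \<iota> \<alpha> w) + smultp \<alpha> (circW circ \<iota> a (Sword circ \<iota> \<alpha> w))"

definition Sop :: "('a \<Rightarrow> 'a \<Rightarrow> ('a \<Rightarrow>\<^sub>0 'r::comm_ring_1)) \<Rightarrow> ('r \<Rightarrow> 'b::comm_ring_1) \<Rightarrow> 'b
     \<Rightarrow> ('a list \<Rightarrow>\<^sub>0 'b) \<Rightarrow> ('a list \<Rightarrow>\<^sub>0 'b)" where
  "Sop circ \<iota> \<alpha> = linext (Sword circ \<iota> \<alpha>)"

definition minus_id :: "(('k \<Rightarrow>\<^sub>0 'b::comm_ring_1) \<Rightarrow> ('k \<Rightarrow>\<^sub>0 'b)) \<Rightarrow> ('k \<Rightarrow>\<^sub>0 'b) \<Rightarrow> ('k \<Rightarrow>\<^sub>0 'b)" where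
  "minus_id L x = L x - x"

definition ninv :: "nat \<Rightarrow> 'b::comm_ring_1" where
  "ninv k = (THE y. of_nat k * y = 1)"

definition log_terms :: "(('k \<Rightarrow>\<^sub>0 'b::comm_ring_1) \<Rightarrow> ('k \<Rightarrow>\<^sub>0 'b)) \<Rightarrow> ('k \<Rightarrow>\<^sub>0 'b) \<Rightarrow> nat set" where
  "log_terms L x = {k. 1 \<le> k \<and> (minus_id L ^^ k) x \<noteq> 0}"

text \<open>log L (x) = sum_{k \<ge> 1} (-1)^(k-1)/k (L-1)^k x, as a sum over the (finite) set of
  nonzero terms.\<close>
definition logop :: "(('k \<Rightarrow>\<^sub>0 'b::comm_ring_1) \<Rightarrow> ('k \<Rightarrow>\<^sub>0 'b)) \<Rightarrow> ('k \<Rightarrow>\<^sub>0 'b) \<Rightarrow> ('k \<Rightarrow>\<^sub>0 'b)" where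
  "logop L x = (\<Sum>k\<in>log_terms L x. smultp ((-1) ^ (k - 1) * ninv k) ((minus_id L ^^ k) x))"

definition cat :: "('a list \<Rightarrow>\<^sub>0 'b::comm_ring_1) \<Rightarrow> ('a list \<Rightarrow>\<^sub>0 'b) \<Rightarrow> ('a list \<Rightarrow>\<^sub>0 'b)" where
  "cat x y = linext (\<lambda>u. linext (\<lambda>v. Poly_Mapping.single (u @ v) 1) y) x"

fun zprod :: "('a \<Rightarrow> 'a \<Rightarrow> ('a \<Rightarrow>\<^sub>0 'r::comm_ring_1)) \<Rightarrow> 'a list \<Rightarrow> ('a \<Rightarrow>\<^sub>0 'r)" where
  "zprod circ [] = 0"
| "zprod circ [a] = Poly_Mapping.single a 1"
| "zprod circ (a # b # as) = circZ circ (Poly_Mapping.single a 1) (zprod circ (b # as))"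

fun zword :: "('a \<Rightarrow>\<^sub>0 'r::comm_ring_1) list \<Rightarrow> ('a list \<Rightarrow>\<^sub>0 'r)" where
  "zword [] = Poly_Mapping.single [] 1"
| "zword (z # zs) = cat (linext (\<lambda>c. Poly_Mapping.single [c] 1) z) (zword zs)"

definition Rset :: "nat \<Rightarrow> nat list set" where
  "Rset n = {r. r \<noteq> [] \<and> sorted_wrt (<) r \<and> hd r = 0 \<and> last r = n \<and> set r \<subseteq> {0..n}}"

definition sigma :: "nat \<Rightarrow> nat list \<Rightarrow> nat" where
  "sigma n r = n - (length r - 1)"

text \<open>Con_r(w) = b_1...b_s, b_i = a_{r_(i-1)+1} \<circ> ... \<circ> a_{r_i}.\<close>
definition Con :: "('a \<Rightarrow> 'a \<Rightarrow> ('a \<Rightarrow>\<^sub>0 'r::comm_ring_1)) \<Rightarrow> nat list \<Rightarrow> 'a list \<Rightarrow> ('a list \<Rightarrow>\<^sub>0 'r)" where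
  "Con circ r w = zword (map (\<lambda>i. zprod circ (take (r ! (i+1) - r ! i) (drop (r ! i) w)))
                              [0..<length r - 1])"

end

theory Submission
  imports Defs "HOL-Combinatorics.Stirling"
begin

text \<open>
  Let D = S^alpha - 1. The heart of the proof is an explicit formula for the powers of D on a
  word w of length n,

    D^k(w) = sum over r in R_n of  alpha^sigma(r) * k! * Stirling(sigma(r), k) * Con_r(w),

  where k! * Stirling(m, k) is the number of surjections from an m-set onto a k-set.
  It is proved by induction on w from the two commutation rules

    D(a x) = a D(x) + alpha * a o (x + D(x))     and     D(a o x) = a o D(x)

  (the second one is where associativity of o enters), together with the decomposition of
  R_(n+1) into the sequences whose first block is {1} and those obtained by adding the new first
  letter to the first block of a sequence in R_n.  Since the surjection numbers vanish for k > m,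
  only the terms k <= n of the logarithm series are nonzero on w, and the telescoping identity
  sum over k >= 1 of (-1)^(k-1)/k * k! * Stirling(m, k) = [m = 1] collapses log S^alpha(w) to
  alpha * (sum of Con_r(w) over sigma(r) = 1).  Taking alpha = t and alpha = 1 gives the theorem.
\<close>


section \<open>Finitely supported maps as a module\<close>

lemma lookup_smultp [simp]: "Poly_Mapping.lookup (smultp c p) k = c * Poly_Mapping.lookup p k"
  by (simp add: smultp_def map.rep_eq when_def)

lemma smultp_0_left [simp]: "smultp 0 x = 0"
  by (rule poly_mapping_eqI) simp

lemma smultp_0_right [simp]: "smultp c 0 = 0"
  by (rule poly_mapping_eqI) simp

lemma smultp_1 [simp]: "smultp 1 x = x"
  by (rule poly_mapping_eqI) simp

lemma smultp_smultp [simp]: "smultp c (smultp d x) = smultp (c * d) x"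
  by (rule poly_mapping_eqI) (simp add: algebra_simps)

lemma smultp_minus_one: "smultp (-1) x = - x"
  by (rule poly_mapping_eqI) simp

lemma smultp_add_left: "smultp (c + d) x = smultp c x + smultp d x"
  by (rule poly_mapping_eqI) (simp add: lookup_add algebra_simps)

lemma smultp_add_right: "smultp c (x + y) = smultp c x + smultp c y"
  by (rule poly_mapping_eqI) (simp add: lookup_add algebra_simps)

lemma smultp_diff_right: "smultp c (x - y) = smultp c x - smultp c y"
  by (rule poly_mapping_eqI) (simp add: lookup_minus algebra_simps)

lemma smultp_sum_left: "smultp (\<Sum>i\<in>I. f i) x = (\<Sum>i\<in>I. smultp (f i) x)"
  by (rule poly_mapping_eqI) (simp add: lookup_sum sum_distrib_right)

lemma smultp_sum_right: "smultp c (\<Sum>i\<in>I. f i) = (\<Sum>i\<in>I. smultp c (f i))"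
  by (rule poly_mapping_eqI) (simp add: lookup_sum sum_distrib_left)

lemma smultp_single: "smultp c (Poly_Mapping.single k d) = Poly_Mapping.single k (c * d)"
  by (rule poly_mapping_eqI) (simp add: lookup_single when_def)

lemma linext_superset:
  assumes "finite A" "Poly_Mapping.keys x \<subseteq> A"
  shows "linext f x = (\<Sum>k\<in>A. smultp (Poly_Mapping.lookup x k) (f k))"
  unfolding linext_def using assms
  by (intro sum.mono_neutral_left) (auto simp: in_keys_iff)

lemma linext_add: "linext f (x + y) = linext f x + linext f y"
proof -
  let ?A = "Poly_Mapping.keys x \<union> Poly_Mapping.keys y"
  have keys: "Poly_Mapping.keys (x + y) \<subseteq> ?A"
    by (auto simp: in_keys_iff lookup_add)
  have "linext f (x + y) = (\<Sum>k\<in>?A. smultp (Poly_Mapping.lookup (x + y) k) (f k))"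
    using keys by (intro linext_superset) auto
  also have "\<dots> = (\<Sum>k\<in>?A. smultp (Poly_Mapping.lookup x k) (f k))
                  + (\<Sum>k\<in>?A. smultp (Poly_Mapping.lookup y k) (f k))"
    by (simp add: lookup_add smultp_add_left sum.distrib)
  also have "\<dots> = linext f x + linext f y"
    by (subst (1 2) linext_superset[of ?A]) auto
  finally show ?thesis .
qed

lemma linext_smultp: "linext f (smultp c x) = smultp c (linext f x)"
proof -
  have "linext f (smultp c x)
      = (\<Sum>k\<in>Poly_Mapping.keys x. smultp (Poly_Mapping.lookup (smultp c x) k) (f k))"
    by (rule linext_superset) (auto simp: in_keys_iff)
  thus ?thesis by (simp add: linext_def smultp_sum_right)
qed

lemma linext_single [simp]: "linext f (Poly_Mapping.single k c) = smultp c (f k)"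
proof -
  have "linext f (Poly_Mapping.single k c)
      = (\<Sum>k'\<in>{k}. smultp (Poly_Mapping.lookup (Poly_Mapping.single k c) k') (f k'))"
    by (rule linext_superset) auto
  thus ?thesis by simp
qed

lemma linext_fun_add: "linext (\<lambda>k. f k + g k) x = linext f x + linext g x"
  by (simp add: linext_def smultp_add_right sum.distrib)

lemma linext_fun_zero [simp]: "linext (\<lambda>k. 0) x = 0"
  by (simp add: linext_def)

lemma linext_fun_smultp: "linext (\<lambda>k. smultp c (f k)) x = smultp c (linext f x)"
  by (simp add: linext_def smultp_sum_right mult.commute)

definition pm_linear :: "(('k \<Rightarrow>\<^sub>0 'b::comm_ring_1) \<Rightarrow> ('m \<Rightarrow>\<^sub>0 'b)) \<Rightarrow> bool" where
  "pm_linear F \<longleftrightarrow> (\<forall>x y. F (x + y) = F x + F y) \<and> (\<forall>c x. F (smultp c x) = smultp c (F x))"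

lemma pm_linear_add: "pm_linear F \<Longrightarrow> F (x + y) = F x + F y"
  by (simp add: pm_linear_def)

lemma pm_linear_smultp: "pm_linear F \<Longrightarrow> F (smultp c x) = smultp c (F x)"
  by (simp add: pm_linear_def)

lemma pm_linear_zero: "pm_linear F \<Longrightarrow> F 0 = 0"
  using pm_linear_smultp[of F 0 0] by simp

lemma pm_linear_diff:
  assumes F: "pm_linear F"
  shows "F (x - y) = F x - F y"
proof -
  have "F (x - y) = F (x + smultp (-1) y)" by (simp add: smultp_minus_one)
  also have "\<dots> = F x + smultp (-1) (F y)" using F by (simp only: pm_linear_add pm_linear_smultp)
  finally show ?thesis by (simp add: smultp_minus_one)
qed

lemma pm_linear_sum: "pm_linear F \<Longrightarrow> F (\<Sum>i\<in>I. g i) = (\<Sum>i\<in>I. F (g i))"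
  by (induction I rule: infinite_finite_induct) (auto simp: pm_linear_zero pm_linear_add)

lemma pm_linear_linext: "pm_linear (linext f)"
  by (simp add: pm_linear_def linext_add linext_smultp)

lemma pm_linear_comp: "pm_linear F \<Longrightarrow> pm_linear G \<Longrightarrow> pm_linear (\<lambda>x. F (G x))"
  by (simp add: pm_linear_def)

lemma pm_linear_plus: "pm_linear F \<Longrightarrow> pm_linear G \<Longrightarrow> pm_linear (\<lambda>x. F x + G x)"
  by (simp add: pm_linear_def smultp_add_right algebra_simps)

lemma pm_linear_scale: "pm_linear F \<Longrightarrow> pm_linear (\<lambda>x. smultp c (F x))"
  by (simp add: pm_linear_def smultp_add_right mult.commute)

lemma pm_linear_funpow:
  fixes F :: "('k \<Rightarrow>\<^sub>0 'b::comm_ring_1) \<Rightarrow> ('k \<Rightarrow>\<^sub>0 'b)"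
  shows "pm_linear F \<Longrightarrow> pm_linear (F ^^ k)"
  by (induction k) (simp_all add: pm_linear_def)

lemma pm_linear_minus_id:
  fixes F :: "('k \<Rightarrow>\<^sub>0 'b::comm_ring_1) \<Rightarrow> ('k \<Rightarrow>\<^sub>0 'b)"
  shows "pm_linear F \<Longrightarrow> pm_linear (minus_id F)"
  by (simp add: pm_linear_def minus_id_def smultp_diff_right)

lemma pm_basis_expansion:
  "x = (\<Sum>k\<in>Poly_Mapping.keys x. smultp (Poly_Mapping.lookup x k) (Poly_Mapping.single k 1))"
proof (rule poly_mapping_eqI)
  fix k
  have "(\<Sum>j\<in>Poly_Mapping.keys x. Poly_Mapping.lookup x j * (if j = k then 1 else 0))
      = (\<Sum>j\<in>Poly_Mapping.keys x. if j = k then Poly_Mapping.lookup x j else 0)"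
    by (rule sum.cong) auto
  also have "\<dots> = Poly_Mapping.lookup x k"
    by (simp add: sum.delta' in_keys_iff)
  finally show "Poly_Mapping.lookup x k = Poly_Mapping.lookup
      (\<Sum>k\<in>Poly_Mapping.keys x. smultp (Poly_Mapping.lookup x k) (Poly_Mapping.single k 1)) k"
    by (simp add: lookup_sum lookup_single when_def)
qed

lemma pm_linear_expand:
  assumes F: "pm_linear F"
  shows "F x = linext (\<lambda>k. F (Poly_Mapping.single k 1)) x"
proof -
  have "F x = F (\<Sum>k\<in>Poly_Mapping.keys x. smultp (Poly_Mapping.lookup x k) (Poly_Mapping.single k 1))"
    by (subst pm_basis_expansion[of x]) (rule refl)
  thus ?thesis by (simp add: pm_linear_sum[OF F] pm_linear_smultp[OF F] linext_def)
qed

lemma pm_linear_eqI: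
  assumes "pm_linear F" "pm_linear G"
    and "\<And>k. F (Poly_Mapping.single k 1) = G (Poly_Mapping.single k 1)"
  shows "F x = G x"
proof -
  have "F x = linext (\<lambda>k. F (Poly_Mapping.single k 1)) x" by (rule pm_linear_expand[OF assms(1)])
  also have "\<dots> = linext (\<lambda>k. G (Poly_Mapping.single k 1)) x" by (simp add: assms(3))
  also have "\<dots> = G x" by (rule pm_linear_expand[OF assms(2), symmetric])
  finally show ?thesis .
qed

lemma pm_linear_linext_push: "pm_linear F \<Longrightarrow> F (linext g z) = linext (\<lambda>k. F (g k)) z"
  by (simp add: linext_def pm_linear_sum pm_linear_smultp)

lemma pm_linear_linext_param: "(\<And>c. pm_linear (F c)) \<Longrightarrow> pm_linear (\<lambda>y. linext (\<lambda>c. F c y) z)"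
  by (simp add: pm_linear_def linext_fun_add linext_fun_smultp)

lemma linext_linext: "linext f (linext g z) = linext (\<lambda>k. linext f (g k)) z"
  by (rule pm_linear_linext_push[OF pm_linear_linext])


section \<open>Coefficient extension along a ring homomorphism\<close>

text \<open>Coefficients are moved along the
  identity (for \<open>\<frak>h\<^sup>1\<close>) and along the constant-polynomial embedding (for \<open>\<frak>h\<^sup>1[t]\<close>).\<close>
definition rhom :: "('r::comm_ring_1 \<Rightarrow> 'b::comm_ring_1) \<Rightarrow> bool" where
  "rhom \<iota> \<longleftrightarrow> \<iota> 0 = 0 \<and> \<iota> 1 = 1 \<and> (\<forall>a b. \<iota> (a + b) = \<iota> a + \<iota> b) \<and> (\<forall>a b. \<iota> (a * b) = \<iota> a * \<iota> b)"

lemma rhom_id: "rhom id"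
  by (simp add: rhom_def)

lemma rhom_const_poly: "rhom (\<lambda>r. [:r:])"
  by (simp add: rhom_def)

lemma embedc_id [simp]: "embedc id x = x"
  by (rule poly_mapping_eqI) (simp add: embedc_def map.rep_eq when_def)

context
  fixes \<iota> :: "'r::comm_ring_1 \<Rightarrow> 'b::comm_ring_1"
  assumes hom: "rhom \<iota>"
begin

lemma hom_0 [simp]: "\<iota> 0 = 0"
  and hom_1 [simp]: "\<iota> 1 = 1"
  and hom_add [simp]: "\<iota> (a + b) = \<iota> a + \<iota> b"
  and hom_mult [simp]: "\<iota> (a * b) = \<iota> a * \<iota> b"
  using hom by (auto simp: rhom_def)

lemma hom_sum [simp]: "\<iota> (\<Sum>i\<in>I. f i) = (\<Sum>i\<in>I. \<iota> (f i))"
  by (induction I rule: infinite_finite_induct) auto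

lemma lookup_embedc [simp]: "Poly_Mapping.lookup (embedc \<iota> x) k = \<iota> (Poly_Mapping.lookup x k)"
  by (simp add: embedc_def map.rep_eq when_def)

lemma embedc_zero [simp]: "embedc \<iota> 0 = 0"
  by (rule poly_mapping_eqI) simp

lemma embedc_single [simp]: "embedc \<iota> (Poly_Mapping.single k c) = Poly_Mapping.single k (\<iota> c)"
  by (rule poly_mapping_eqI) (simp add: lookup_single when_def)

lemma embedc_smultp: "embedc \<iota> (smultp c x) = smultp (\<iota> c) (embedc \<iota> x)"
  by (rule poly_mapping_eqI) simp

lemma embedc_sum: "embedc \<iota> (\<Sum>i\<in>I. f i) = (\<Sum>i\<in>I. embedc \<iota> (f i))"
  by (rule poly_mapping_eqI) (simp add: lookup_sum)

lemma embedc_linext: "embedc \<iota> (linext f z) = linext (\<lambda>k. embedc \<iota> (f k)) (embedc \<iota> z)"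
proof -
  have "linext (\<lambda>k. embedc \<iota> (f k)) (embedc \<iota> z)
     = (\<Sum>k\<in>Poly_Mapping.keys z. smultp (Poly_Mapping.lookup (embedc \<iota> z) k) (embedc \<iota> (f k)))"
    by (rule linext_superset) (auto simp: in_keys_iff)
  thus ?thesis by (simp add: linext_def embedc_sum embedc_smultp)
qed

lemma embedc_transfer:
  assumes F: "pm_linear F" and G: "pm_linear G"
    and basis: "\<And>u. G (Poly_Mapping.single u 1) = embedc \<iota> (F (Poly_Mapping.single u 1))"
  shows "G (embedc \<iota> y) = embedc \<iota> (F y)"
proof -
  have "G (embedc \<iota> y) = linext (\<lambda>k. G (Poly_Mapping.single k 1)) (embedc \<iota> y)"
    by (rule pm_linear_expand[OF G])
  also have "\<dots> = embedc \<iota> (linext (\<lambda>k. F (Poly_Mapping.single k 1)) y)"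
    by (simp add: basis embedc_linext)
  also have "\<dots> = embedc \<iota> (F y)"
    by (simp only: pm_linear_expand[OF F, symmetric])
  finally show ?thesis .
qed

end


lemma pm_linear_Sop: "pm_linear (Sop circ \<iota> \<alpha>)"
  by (simp add: Sop_def pm_linear_linext)

lemma pm_linear_prepend: "pm_linear (prepend a)"
  by (simp add: prepend_def[abs_def] pm_linear_linext)

lemma pm_linear_circW: "pm_linear (circW circ \<iota> a)"
  by (simp add: circW_def[abs_def] pm_linear_linext)

lemma Sop_single: "Sop circ \<iota> \<alpha> (Poly_Mapping.single u c) = smultp c (Sword circ \<iota> \<alpha> u)"
  by (simp add: Sop_def)

lemma prepend_single: "prepend a (Poly_Mapping.single u c) = Poly_Mapping.single (a # u) c"
  by (simp add: prepend_def smultp_single)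

lemma circW_Nil: "circW circ \<iota> a (Poly_Mapping.single [] c) = 0"
  by (simp add: circW_def)

lemma circW_Cons: "circW circ \<iota> a (Poly_Mapping.single (b # v) c)
   = smultp c (linext (\<lambda>e. Poly_Mapping.single (e # v) 1) (embedc \<iota> (circ a b)))"
  by (simp add: circW_def)

lemma circZ_single_left: "circZ circ (Poly_Mapping.single a 1) z = linext (\<lambda>b. circ a b) z"
  by (simp add: circZ_def)

lemma circZ_single_right: "circZ circ z (Poly_Mapping.single b 1) = linext (\<lambda>a. circ a b) z"
  by (simp add: circZ_def)

lemma Sop_prepend: "Sop circ \<iota> \<alpha> (prepend a x)
   = prepend a (Sop circ \<iota> \<alpha> x) + smultp \<alpha> (circW circ \<iota> a (Sop circ \<iota> \<alpha> x))"
proof (rule pm_linear_eqI[where F="\<lambda>x. Sop circ \<iota> \<alpha> (prepend a x)"])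
  show "pm_linear (\<lambda>x. Sop circ \<iota> \<alpha> (prepend a x))"
    by (rule pm_linear_comp[OF pm_linear_Sop pm_linear_prepend])
  show "pm_linear (\<lambda>x. prepend a (Sop circ \<iota> \<alpha> x) + smultp \<alpha> (circW circ \<iota> a (Sop circ \<iota> \<alpha> x)))"
    by (intro pm_linear_plus pm_linear_scale pm_linear_comp[OF pm_linear_prepend pm_linear_Sop]
        pm_linear_comp[OF pm_linear_circW pm_linear_Sop])
qed (simp only: prepend_single Sop_single smultp_1 Sword.simps)

lemma circW_prepend: "circW circ \<iota> a (prepend b y) = linext (\<lambda>c. prepend c y) (embedc \<iota> (circ a b))"
proof (rule pm_linear_eqI[where F="\<lambda>y. circW circ \<iota> a (prepend b y)"])
  show "pm_linear (\<lambda>y. circW circ \<iota> a (prepend b y))"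
    by (rule pm_linear_comp[OF pm_linear_circW pm_linear_prepend])
  show "pm_linear (\<lambda>y. linext (\<lambda>c. prepend c y) (embedc \<iota> (circ a b)))"
    by (rule pm_linear_linext_param[OF pm_linear_prepend])
qed (simp add: prepend_single circW_Cons)

lemma prepend_embedc: "rhom \<iota> \<Longrightarrow> prepend a (embedc \<iota> y) = embedc \<iota> (prepend a y)"
  by (rule embedc_transfer[OF _ pm_linear_prepend pm_linear_prepend]) (simp_all add: prepend_single)

lemma circW_embedc: "rhom \<iota> \<Longrightarrow> circW circ \<iota> a (embedc \<iota> y) = embedc \<iota> (circW circ id a y)"
proof (rule embedc_transfer[OF _ pm_linear_circW pm_linear_circW])
  fix u
  assume "rhom \<iota>"
  then show "circW circ \<iota> a (Poly_Mapping.single u 1) = embedc \<iota> (circW circ id a (Poly_Mapping.single u 1))"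
    by (cases u) (simp_all add: circW_Nil circW_Cons embedc_linext)
qed

lemma zword_Cons_linext: "zword (z # zs) = linext (\<lambda>c. prepend c (zword zs)) z"
proof -
  have "zword (z # zs) = linext (\<lambda>c. cat (Poly_Mapping.single [c] 1) (zword zs)) z"
    by (simp add: pm_linear_linext_push[OF pm_linear_linext] cat_def[abs_def])
  thus ?thesis by (simp add: cat_def prepend_def)
qed

lemma zword_single: "zword (Poly_Mapping.single a 1 # zs) = prepend a (zword zs)"
  by (simp add: zword_Cons_linext del: zword.simps(2))

lemma circW_zword:
  "circW circ id a (zword (z # zs)) = zword (circZ circ (Poly_Mapping.single a 1) z # zs)"
proof -
  have "circW circ id a (zword (z # zs)) = linext (\<lambda>c. circW circ id a (prepend c (zword zs))) z"
    by (simp add: zword_Cons_linext pm_linear_linext_push[OF pm_linear_circW] del: zword.simps(2))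
  also have "\<dots> = zword (circZ circ (Poly_Mapping.single a 1) z # zs)"
    by (simp add: circW_prepend zword_Cons_linext circZ_single_left linext_linext
        del: zword.simps(2))
  finally show ?thesis .
qed

lemma zprod_Cons: "bs \<noteq> [] \<Longrightarrow> zprod circ (a # bs) = circZ circ (Poly_Mapping.single a 1) (zprod circ bs)"
  by (cases bs) auto


section \<open>The sets \<open>R\<^sub>n\<close> and the contractions \<open>Con\<^sub>r\<close>\<close>

text \<open>A sequence \<open>r \<in> R\<^sub>n\<close> describes a decomposition of a word of length \<open>n\<close> into consecutive
  nonempty blocks. For a word \<open>a w\<close>, the new letter \<open>a\<close> either forms a block of its own
  (\<open>split_first\<close>, which keeps \<open>\<sigma>\<close>) or is added to the first block (\<open>join_first\<close>, which
  raises \<open>\<sigma>\<close> by one).\<close>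
definition split_first :: "nat list \<Rightarrow> nat list" where
  "split_first r = 0 # map Suc r"

definition join_first :: "nat list \<Rightarrow> nat list" where
  "join_first r = 0 # map Suc (tl r)"

lemma Rset_Cons: "r \<in> Rset n \<Longrightarrow> r = 0 # tl r"
  by (cases r) (auto simp: Rset_def)

lemma Rset_tl: "r \<in> Rset n \<Longrightarrow> 0 < n \<Longrightarrow> tl r \<noteq> []"
  by (cases r) (auto simp: Rset_def)

lemma Rset_length: "r \<in> Rset n \<Longrightarrow> length r \<le> Suc n"
proof -
  assume "r \<in> Rset n"
  hence "distinct r" "set r \<subseteq> {0..n}" by (auto simp: Rset_def strict_sorted_iff)
  hence "card (set r) \<le> card {0..n}" by (intro card_mono) auto
  thus ?thesis using distinct_card[OF \<open>distinct r\<close>] by simp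
qed

lemma finite_Rset: "finite (Rset n)"
proof (rule finite_subset)
  show "Rset n \<subseteq> {xs. set xs \<subseteq> {0..n} \<and> length xs \<le> Suc n}"
    using Rset_length by (auto simp: Rset_def)
  show "finite {xs. set xs \<subseteq> {0..n} \<and> length xs \<le> Suc n}"
    by (rule finite_lists_length_le) simp
qed

lemma Rset_0: "Rset 0 = {[0]}"
proof -
  have "r = [0]" if "r \<in> Rset 0" for r
  proof -
    have "set r \<subseteq> {0}" "r \<noteq> []" "sorted_wrt (<) r" using that by (auto simp: Rset_def)
    thus "r = [0]" by (cases r; cases "tl r") auto
  qed
  thus ?thesis by (auto simp: Rset_def)
qed

lemma split_first_Rset: "r \<in> Rset n \<Longrightarrow> split_first r \<in> Rset (Suc n)"
  by (auto simp: Rset_def split_first_def sorted_wrt_map last_map)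

lemma join_first_Rset: "r \<in> Rset n \<Longrightarrow> 0 < n \<Longrightarrow> join_first r \<in> Rset (Suc n)"
  using Rset_Cons[of r n] Rset_tl[of r n]
  by (cases r) (auto simp: Rset_def join_first_def sorted_wrt_map last_map)

text \<open>Every element of \<open>R\<^sub>n\<^sub>+\<^sub>1\<close> arises from \<open>R\<^sub>n\<close> by one of the two operations: remove the
  new letter from its block and shift all indices down.\<close>
lemma Rset_Suc_cases:
  assumes r': "r' \<in> Rset (Suc n)"
  shows "\<exists>r\<in>Rset n. r' = split_first r \<or> (0 < n \<and> r' = join_first r)"
proof -
  obtain t where t: "r' = 0 # t" using Rset_Cons[OF r'] by blast
  have tne: "t \<noteq> []" using r' t by (auto simp: Rset_def)
  have pos: "\<forall>x\<in>set t. 0 < x" and st: "sorted_wrt (<) t"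
    and lt: "last t = Suc n" and sub: "set t \<subseteq> {0..Suc n}"
    using r' t tne by (auto simp: Rset_def)
  let ?down = "map (\<lambda>x. x - 1) t"
  have up_down: "map Suc ?down = t" using pos by (induction t) auto
  have "sorted_wrt (\<lambda>x y. x - 1 < y - 1) t"
    by (rule sorted_wrt_mono_rel[OF _ st]) (use pos in auto)
  hence st': "sorted_wrt (<) ?down" by (simp add: sorted_wrt_map)
  obtain y ys where y: "t = y # ys" using tne by (cases t) auto
  show ?thesis
  proof (cases "y = 1")
    case True
    have "?down \<in> Rset n" using True y st' lt sub tne by (auto simp: Rset_def last_map)
    moreover have "r' = split_first ?down" using t up_down by (simp add: split_first_def)
    ultimately show ?thesis by blast
  next
    case False
    have y2: "2 \<le> y" using False pos y by (cases y) auto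
    have above: "\<forall>x\<in>set t. y \<le> x" using st y by auto
    hence "\<forall>x\<in>set t. 0 < x - 1" using y2 by fastforce
    hence "0 # ?down \<in> Rset n" using st' lt sub tne by (auto simp: Rset_def last_map)
    moreover have "r' = join_first (0 # ?down)" using t up_down by (simp add: join_first_def)
    moreover have "0 < n"
      using above lt y2 tne by (metis One_nat_def last_in_set le_antisym le_refl lessI not_gr0
          not_less_eq_eq numeral_2_eq_2)
    ultimately show ?thesis by blast
  qed
qed

lemma Rset_Suc: "0 < n \<Longrightarrow> Rset (Suc n) = split_first ` Rset n \<union> join_first ` Rset n"
  using Rset_Suc_cases[of _ n] split_first_Rset join_first_Rset by blast

lemma Rset_1: "Rset (Suc 0) = {[0, 1]}"
proof -
  have "Rset (Suc 0) = split_first ` Rset 0"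
    using Rset_Suc_cases[of _ 0] split_first_Rset[of _ 0] by blast
  thus ?thesis by (simp add: Rset_0 split_first_def)
qed

lemma split_join_disjoint: "split_first ` Rset n \<inter> join_first ` Rset n = {}"
proof -
  have "split_first r \<noteq> join_first s" if r: "r \<in> Rset n" and s: "s \<in> Rset n" for r s
  proof -
    obtain t where t: "r = 0 # t" using Rset_Cons[OF r] by blast
    obtain u where u: "s = 0 # u" using Rset_Cons[OF s] by blast
    have "\<forall>x\<in>set u. 0 < x" using s u by (auto simp: Rset_def)
    thus ?thesis using t u by (cases u) (auto simp: split_first_def join_first_def)
  qed
  thus ?thesis by blast
qed

lemma inj_split_first: "inj_on split_first A"
  by (auto simp: inj_on_def split_first_def)

lemma inj_join_first: "inj_on join_first (Rset n)"
proof (rule inj_onI)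
  fix r s assume "r \<in> Rset n" "s \<in> Rset n" "join_first r = join_first s"
  hence "map Suc (tl r) = map Suc (tl s)" by (simp add: join_first_def)
  hence "tl r = tl s" by (simp add: inj_map_eq_map)
  thus "r = s" using Rset_Cons[of r n] Rset_Cons[of s n] \<open>r \<in> Rset n\<close> \<open>s \<in> Rset n\<close> by metis
qed

lemma sigma_le: "sigma n r \<le> n"
  by (simp add: sigma_def)

lemma sigma_split_first: "r \<in> Rset n \<Longrightarrow> sigma (Suc n) (split_first r) = sigma n r"
  using Rset_Cons[of r n] by (cases r) (auto simp: sigma_def split_first_def)

lemma sigma_join_first: "r \<in> Rset n \<Longrightarrow> sigma (Suc n) (join_first r) = Suc (sigma n r)"
  using Rset_length[of r n] Rset_Cons[of r n] by (cases r) (auto simp: sigma_def join_first_def)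

lemma upt_0_Suc: "[0..<Suc m] = 0 # map Suc [0..<m]"
  by (simp only: upt_conv_Cons[of 0 "Suc m"] map_Suc_upt)

lemma Con_split_first:
  assumes r: "r \<in> Rset (length w)"
  shows "Con circ (split_first r) (a # w) = prepend a (Con circ r w)"
proof -
  obtain t where t: "r = 0 # t" using Rset_Cons[OF r] by blast
  let ?r' = "split_first r"
  define f' where "f' = (\<lambda>i. zprod circ (take (?r' ! (i+1) - ?r' ! i) (drop (?r' ! i) (a # w))))"
  define f where "f = (\<lambda>i. zprod circ (take (r ! (i+1) - r ! i) (drop (r ! i) w)))"
  have blocks: "[0..<length r] = 0 # map Suc [0..<length r - 1]"
    using t by (simp only: upt_0_Suc length_Cons diff_Suc_1)
  have "Con circ ?r' (a # w) = zword (map f' [0..<length r])"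
    by (simp add: Con_def f'_def split_first_def del: upt_Suc)
  also have "\<dots> = zword (f' 0 # map (\<lambda>i. f' (Suc i)) [0..<length r - 1])"
    by (subst blocks) (simp add: comp_def del: upt_Suc zword.simps(2))
  also have "f' 0 = Poly_Mapping.single a 1" using t by (simp add: f'_def split_first_def)
  also have "map (\<lambda>i. f' (Suc i)) [0..<length r - 1] = map f [0..<length r - 1]"
    by (rule map_cong) (auto simp: f'_def f_def nth_map split_first_def)
  also have "zword (Poly_Mapping.single a 1 # map f [0..<length r - 1]) = prepend a (Con circ r w)"
    by (simp add: zword_single Con_def f_def del: upt_Suc zword.simps(2))
  finally show ?thesis .
qed

lemma Con_join_first:
  assumes r: "r \<in> Rset (length w)" and w: "w \<noteq> []"
  shows "Con circ (join_first r) (a # w) = circW circ id a (Con circ r w)"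
proof -
  obtain t where t: "r = 0 # t" using Rset_Cons[OF r] by blast
  have "t \<noteq> []" using Rset_tl[OF r] t w by simp
  then obtain r1 rest where t1: "t = r1 # rest" by (cases t) auto
  have r1: "0 < r1" using r t t1 by (auto simp: Rset_def)
  let ?r' = "0 # map Suc t"
  define f' where "f' = (\<lambda>i. zprod circ (take (?r' ! (i+1) - ?r' ! i) (drop (?r' ! i) (a # w))))"
  define f where "f = (\<lambda>i. zprod circ (take (r ! (i+1) - r ! i) (drop (r ! i) w)))"
  have blocks: "[0..<length t] = 0 # map Suc [0..<length t - 1]"
    using t1 by (simp only: upt_0_Suc length_Cons diff_Suc_1)
  have "Con circ ?r' (a # w) = zword (map f' [0..<length t])"
    by (simp add: Con_def f'_def del: upt_Suc)
  also have "\<dots> = zword (f' 0 # map (\<lambda>i. f' (Suc i)) [0..<length t - 1])"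
    by (subst blocks) (simp add: comp_def del: upt_Suc zword.simps(2))
  also have "f' 0 = circZ circ (Poly_Mapping.single a 1) (f 0)"
  proof -
    have "take r1 w \<noteq> []" using r1 w by simp
    thus ?thesis using t t1 by (simp add: f'_def f_def zprod_Cons)
  qed
  also have "map (\<lambda>i. f' (Suc i)) [0..<length t - 1] = map (\<lambda>i. f (Suc i)) [0..<length t - 1]"
    by (rule map_cong) (auto simp: f'_def f_def nth_map t)
  also have "zword (circZ circ (Poly_Mapping.single a 1) (f 0) # map (\<lambda>i. f (Suc i)) [0..<length t - 1])
      = circW circ id a (zword (f 0 # map (\<lambda>i. f (Suc i)) [0..<length t - 1]))"
    by (simp only: circW_zword)
  also have "f 0 # map (\<lambda>i. f (Suc i)) [0..<length t - 1] = map f [0..<length r - 1]"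
    using t blocks by (simp del: upt_Suc)
  also have "zword (map f [0..<length r - 1]) = Con circ r w"
    by (simp add: Con_def f_def del: upt_Suc)
  finally have "Con circ ?r' (a # w) = circW circ id a (Con circ r w)" .
  moreover have "join_first r = ?r'" using t by (simp add: join_first_def)
  ultimately show ?thesis by (simp only:)
qed


section \<open>Surjection numbers and the logarithm identity\<close>

text \<open>The number of surjections from an \<open>m\<close>-set onto a \<open>k\<close>-set.\<close>
definition surj_count :: "nat \<Rightarrow> nat \<Rightarrow> nat" where
  "surj_count k m = fact k * Stirling m k"

lemma surj_count_0: "surj_count k 0 = (if k = 0 then 1 else 0)"
  by (cases k) (simp_all add: surj_count_def)

lemma surj_count_Suc: "surj_count k (Suc m) = k * (surj_count (k - 1) m + surj_count k m)"
  by (cases k) (simp_all add: surj_count_def algebra_simps)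

lemma surj_count_less: "m < k \<Longrightarrow> surj_count k m = 0"
  by (simp add: surj_count_def)

lemma ninv_mult:
  assumes Q: "\<And>n::nat. 0 < n \<Longrightarrow> \<exists>y::'b::comm_ring_1. of_nat n * y = 1" and n: "0 < n"
  shows "of_nat n * (ninv n :: 'b) = 1"
proof -
  obtain y :: 'b where y: "of_nat n * y = 1" using Q[OF n] by blast
  have "ninv n = y" unfolding ninv_def
  proof (rule the_equality)
    fix y' :: 'b assume y': "of_nat n * y' = 1"
    have "y' = y' * (of_nat n * y)" using y by simp
    also have "\<dots> = (of_nat n * y') * y" by (simp add: algebra_simps)
    finally show "y' = y" using y' by simp
  qed (rule y)
  thus ?thesis using y by simp
qed

text \<open>\<open>\<Sum>\<^sub>k\<^sub>=\<^sub>1\<^sub>.\<^sub>.\<^sub>K (-1)\<^sup>k\<^sup>-\<^sup>1/k \<cdot> surj_count k m = [m = 1]\<close> for \<open>m \<le> K\<close>: by the recursion of the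
  surjection numbers, the summands telescope.\<close>
lemma log_surj_count_sum:
  assumes Q: "\<And>n::nat. 0 < n \<Longrightarrow> \<exists>y::'b::comm_ring_1. of_nat n * y = 1" and mK: "m \<le> K"
  shows "(\<Sum>k\<in>{1..K}. (-1) ^ (k - 1) * ninv k * of_nat (surj_count k m))
         = (if m = 1 then 1 else (0::'b))"
proof (cases m)
  case 0
  thus ?thesis by (simp add: surj_count_0)
next
  case (Suc m')
  define h :: "nat \<Rightarrow> 'b" where "h j = (-1) ^ j * of_nat (surj_count j m')" for j
  have summand: "(-1) ^ (k - 1) * ninv k * of_nat (surj_count k m) = h (k - 1) - h k"
    if k: "0 < k" for k
  proof -
    have "(-1) ^ (k - 1) * ninv k * of_nat (surj_count k m)
        = (-1) ^ (k - 1) * (of_nat k * ninv k) * (of_nat (surj_count (k - 1) m' + surj_count k m') :: 'b)"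
      using Suc by (simp add: surj_count_Suc algebra_simps)
    also have "\<dots> = (-1) ^ (k - 1) * (of_nat (surj_count (k - 1) m') + of_nat (surj_count k m'))"
      by (simp add: ninv_mult[OF Q k])
    also have "\<dots> = h (k - 1) - h k"
      using k by (cases k) (simp_all add: h_def algebra_simps)
    finally show ?thesis .
  qed
  have "(\<Sum>k\<in>{1..K}. (-1) ^ (k - 1) * ninv k * of_nat (surj_count k m)) = (\<Sum>k\<in>{1..K}. h (k - 1) - h k)"
    by (intro sum.cong refl summand) simp
  also have "\<dots> = (\<Sum>i<K. h i - h (Suc i))"
    by (simp add: sum.atLeast1_atMost_eq)
  also have "\<dots> = h 0 - h K"
    by (rule sum_lessThan_telescope')
  also have "h K = 0" using Suc mK by (simp add: h_def surj_count_less)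
  finally have "(\<Sum>k\<in>{1..K}. (-1) ^ (k - 1) * ninv k * of_nat (surj_count k m)) = h 0 - 0" .
  moreover have "h 0 = (if m = 1 then 1 else 0)" using Suc by (cases m') (simp_all add: h_def surj_count_def)
  ultimately show ?thesis by (simp only: diff_zero)
qed


section \<open>The powers of \<open>S\<^sup>\<alpha> - 1\<close> on a word\<close>

text \<open>The coefficient of \<open>Con\<^sub>r(w)\<close> in \<open>D\<^sup>k(w)\<close>, for \<open>w\<close> of length \<open>n\<close>.\<close>
definition Dcoeff :: "'b::comm_ring_1 \<Rightarrow> nat \<Rightarrow> nat \<Rightarrow> nat list \<Rightarrow> 'b" where
  "Dcoeff \<alpha> k n r = \<alpha> ^ sigma n r * of_nat (surj_count k (sigma n r))"

lemma Dcoeff_split_first: "r \<in> Rset n \<Longrightarrow> Dcoeff \<alpha> k (Suc n) (split_first r) = Dcoeff \<alpha> k n r"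
  by (simp add: Dcoeff_def sigma_split_first)

lemma Dcoeff_join_first: "r \<in> Rset n \<Longrightarrow>
    Dcoeff \<alpha> k (Suc n) (join_first r) = of_nat k * \<alpha> * (Dcoeff \<alpha> (k - 1) n r + Dcoeff \<alpha> k n r)"
  by (simp add: Dcoeff_def sigma_join_first surj_count_Suc algebra_simps)

lemma Dcoeff_vanish: "n < k \<Longrightarrow> Dcoeff \<alpha> k n r = 0"
  by (simp add: Dcoeff_def surj_count_less le_less_trans[OF sigma_le])

locale S_alpha_setting =
  fixes circ :: "'a \<Rightarrow> 'a \<Rightarrow> ('a \<Rightarrow>\<^sub>0 'r::comm_ring_1)"
    and \<iota> :: "'r \<Rightarrow> 'b::comm_ring_1" and \<alpha> :: 'b
  assumes hom: "rhom \<iota>"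
    and assoc: "\<And>a b c. circZ circ (circ a b) (Poly_Mapping.single c 1)
                        = circZ circ (Poly_Mapping.single a 1) (circ b c)"
begin

abbreviation S where "S \<equiv> Sop circ \<iota> \<alpha>"
abbreviation C where "C \<equiv> circW circ \<iota>"
abbreviation D where "D \<equiv> minus_id (Sop circ \<iota> \<alpha>)"

lemma circW_circW: "C a (C b y) = linext (\<lambda>c. C c y) (embedc \<iota> (circ a b))"
proof (rule pm_linear_eqI[where F="\<lambda>y. C a (C b y)"])
  show "pm_linear (\<lambda>y. C a (C b y))" by (rule pm_linear_comp[OF pm_linear_circW pm_linear_circW])
  show "pm_linear (\<lambda>y. linext (\<lambda>c. C c y) (embedc \<iota> (circ a b)))"
    by (rule pm_linear_linext_param[OF pm_linear_circW])
  fix k :: "'a list"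
  show "C a (C b (Poly_Mapping.single k 1))
      = linext (\<lambda>c. C c (Poly_Mapping.single k 1)) (embedc \<iota> (circ a b))"
  proof (cases k)
    case Nil
    thus ?thesis by (simp add: circW_Nil pm_linear_zero[OF pm_linear_circW])
  next
    case (Cons d v)
    define Q where "Q = linext (\<lambda>e. Poly_Mapping.single (e # v) (1::'b))"
    have Q: "pm_linear Q" unfolding Q_def by (rule pm_linear_linext)
    have "C a (C b (Poly_Mapping.single k 1)) = C a (Q (embedc \<iota> (circ b d)))"
      by (simp add: Cons circW_Cons Q_def)
    also have "\<dots> = linext (\<lambda>e. C a (Poly_Mapping.single (e # v) 1)) (embedc \<iota> (circ b d))"
      unfolding Q_def by (rule pm_linear_linext_push[OF pm_linear_circW])
    also have "\<dots> = linext (\<lambda>e. Q (embedc \<iota> (circ a e))) (embedc \<iota> (circ b d))"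
      by (simp add: circW_Cons Q_def)
    also have "\<dots> = Q (linext (\<lambda>e. embedc \<iota> (circ a e)) (embedc \<iota> (circ b d)))"
      by (rule pm_linear_linext_push[OF Q, symmetric])
    also have "\<dots> = Q (embedc \<iota> (circZ circ (circ a b) (Poly_Mapping.single d 1)))"
      by (simp add: embedc_linext[OF hom] circZ_single_left assoc)
    also have "\<dots> = Q (linext (\<lambda>c. embedc \<iota> (circ c d)) (embedc \<iota> (circ a b)))"
      by (simp add: embedc_linext[OF hom] circZ_single_right)
    also have "\<dots> = linext (\<lambda>c. Q (embedc \<iota> (circ c d))) (embedc \<iota> (circ a b))"
      by (rule pm_linear_linext_push[OF Q])
    also have "\<dots> = linext (\<lambda>c. C c (Poly_Mapping.single k 1)) (embedc \<iota> (circ a b))"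
      by (simp add: Cons circW_Cons Q_def)
    finally show ?thesis .
  qed
qed

lemma Sop_circW: "S (C a x) = C a (S x)"
proof (rule pm_linear_eqI[where F="\<lambda>x. S (C a x)"])
  show "pm_linear (\<lambda>x. S (C a x))" by (rule pm_linear_comp[OF pm_linear_Sop pm_linear_circW])
  show "pm_linear (\<lambda>x. C a (S x))" by (rule pm_linear_comp[OF pm_linear_circW pm_linear_Sop])
  fix k :: "'a list"
  show "S (C a (Poly_Mapping.single k 1)) = C a (S (Poly_Mapping.single k 1))"
  proof (cases k)
    case Nil
    thus ?thesis by (simp add: circW_Nil pm_linear_zero[OF pm_linear_Sop] Sop_single)
  next
    case (Cons b v)
    let ?z = "embedc \<iota> (circ a b)"
    let ?Sv = "Sword circ \<iota> \<alpha> v"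
    have "S (C a (Poly_Mapping.single k 1)) = S (linext (\<lambda>e. Poly_Mapping.single (e # v) 1) ?z)"
      by (simp add: Cons circW_Cons)
    also have "\<dots> = linext (\<lambda>e. S (Poly_Mapping.single (e # v) 1)) ?z"
      by (rule pm_linear_linext_push[OF pm_linear_Sop])
    also have "\<dots> = linext (\<lambda>e. prepend e ?Sv) ?z + smultp \<alpha> (linext (\<lambda>e. C e ?Sv) ?z)"
      by (simp add: Sop_single linext_fun_add linext_fun_smultp)
    also have "\<dots> = C a (prepend b ?Sv) + smultp \<alpha> (C a (C b ?Sv))"
      by (simp add: circW_prepend circW_circW)
    also have "\<dots> = C a (S (Poly_Mapping.single k 1))"
      by (simp add: Cons Sop_single pm_linear_add[OF pm_linear_circW] pm_linear_smultp[OF pm_linear_circW])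
    finally show ?thesis .
  qed
qed

lemma pm_linear_D: "pm_linear D"
  by (rule pm_linear_minus_id[OF pm_linear_Sop])

lemma D_prepend: "D (prepend a x) = prepend a (D x) + smultp \<alpha> (C a (x + D x))"
  by (simp add: minus_id_def Sop_prepend pm_linear_diff[OF pm_linear_prepend])

lemma D_circW: "D (C a x) = C a (D x)"
  by (simp add: minus_id_def Sop_circW pm_linear_diff[OF pm_linear_circW])

lemma Dpow_prepend: "(D ^^ k) (prepend a x)
   = prepend a ((D ^^ k) x) + smultp (of_nat k * \<alpha>) (C a ((D ^^ (k - 1)) x + (D ^^ k) x))"
proof (induction k)
  case 0
  thus ?case by simp
next
  case (Suc k)
  have "(D ^^ Suc k) (prepend a x)
      = D (prepend a ((D ^^ k) x)) + smultp (of_nat k * \<alpha>) (D (C a ((D ^^ (k - 1)) x + (D ^^ k) x)))"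
    by (simp add: Suc pm_linear_add[OF pm_linear_D] pm_linear_smultp[OF pm_linear_D])
  also have "\<dots> = prepend a ((D ^^ Suc k) x) + smultp \<alpha> (C a ((D ^^ k) x + (D ^^ Suc k) x))
      + smultp (of_nat k * \<alpha>) (C a (D ((D ^^ (k - 1)) x) + (D ^^ Suc k) x))"
    by (simp add: D_prepend D_circW pm_linear_add[OF pm_linear_D])
  also have "\<dots> = prepend a ((D ^^ Suc k) x)
      + smultp (of_nat (Suc k) * \<alpha>) (C a ((D ^^ (Suc k - 1)) x + (D ^^ Suc k) x))"
  proof (cases k)
    case (Suc j)
    hence "D ((D ^^ (k - 1)) x) = (D ^^ k) x" by simp
    thus ?thesis by (simp add: algebra_simps smultp_add_left)
  qed simp
  finally show ?case .
qed

lemma Dpow_Nil: "(D ^^ k) (Poly_Mapping.single [] 1) = (if k = 0 then Poly_Mapping.single [] 1 else 0)"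
proof (induction k)
  case (Suc k)
  have "D (Poly_Mapping.single [] 1) = 0" by (simp add: minus_id_def Sop_single)
  thus ?case using Suc by (simp add: pm_linear_zero[OF pm_linear_D])
qed simp

text \<open>The two parts of \<open>D\<^sup>k(a w)\<close> in terms of the expansion of \<open>D\<^sup>k(w)\<close>: prepending \<open>a\<close> gives the
  terms of the sequences with first block \<open>{1}\<close>, acting by \<open>a\<close> gives the remaining ones.\<close>
lemma prepend_Con_sum: "prepend a (\<Sum>r\<in>Rset (length w). smultp (Dcoeff \<alpha> k (length w) r) (embedc \<iota> (Con circ r w)))
  = (\<Sum>r\<in>split_first ` Rset (length w). smultp (Dcoeff \<alpha> k (Suc (length w)) r) (embedc \<iota> (Con circ r (a # w))))"
  by (simp add: sum.reindex[OF inj_split_first] Dcoeff_split_first Con_split_first prepend_embedc[OF hom]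
      pm_linear_sum[OF pm_linear_prepend] pm_linear_smultp[OF pm_linear_prepend])

lemma circW_Con_sum:
  assumes w: "w \<noteq> []"
  shows "C a (\<Sum>r\<in>Rset (length w). smultp (of_nat k * \<alpha> * (Dcoeff \<alpha> (k - 1) (length w) r + Dcoeff \<alpha> k (length w) r))
                                          (embedc \<iota> (Con circ r w)))
    = (\<Sum>r\<in>join_first ` Rset (length w). smultp (Dcoeff \<alpha> k (Suc (length w)) r) (embedc \<iota> (Con circ r (a # w))))"
  by (simp add: sum.reindex[OF inj_join_first] Dcoeff_join_first Con_join_first[OF _ w] circW_embedc[OF hom]
      pm_linear_sum[OF pm_linear_circW] pm_linear_smultp[OF pm_linear_circW])

lemma Dpow_word:
  "(D ^^ k) (Poly_Mapping.single w 1)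
   = (\<Sum>r\<in>Rset (length w). smultp (Dcoeff \<alpha> k (length w) r) (embedc \<iota> (Con circ r w)))"
proof (induction w arbitrary: k)
  case Nil
  show ?case by (simp add: Dpow_Nil Rset_0 Dcoeff_def sigma_def Con_def surj_count_0
      embedc_single[OF hom] hom_1[OF hom])
next
  case (Cons a w)
  let ?n = "length w"
  let ?sum = "\<lambda>k. \<Sum>r\<in>Rset ?n. smultp (Dcoeff \<alpha> k ?n r) (embedc \<iota> (Con circ r w))"
  let ?split = "\<Sum>r\<in>split_first ` Rset ?n. smultp (Dcoeff \<alpha> k (Suc ?n) r) (embedc \<iota> (Con circ r (a # w)))"
  let ?join = "\<Sum>r\<in>join_first ` Rset ?n. smultp (Dcoeff \<alpha> k (Suc ?n) r) (embedc \<iota> (Con circ r (a # w)))"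
  let ?rest = "\<Sum>r\<in>Rset ?n. smultp (of_nat k * \<alpha> * (Dcoeff \<alpha> (k - 1) ?n r + Dcoeff \<alpha> k ?n r))
                                   (embedc \<iota> (Con circ r w))"
  have "(D ^^ k) (Poly_Mapping.single (a # w) 1)
      = prepend a (?sum k) + smultp (of_nat k * \<alpha>) (C a (?sum (k - 1) + ?sum k))"
    using Dpow_prepend[of k a "Poly_Mapping.single w 1"] by (simp add: prepend_single Cons.IH)
  also have "?sum (k - 1) + ?sum k
      = (\<Sum>r\<in>Rset ?n. smultp (Dcoeff \<alpha> (k - 1) ?n r + Dcoeff \<alpha> k ?n r) (embedc \<iota> (Con circ r w)))"
    by (simp add: sum.distrib[symmetric] smultp_add_left)
  also have "smultp (of_nat k * \<alpha>) (C a \<dots>) = C a ?rest"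
    by (simp add: pm_linear_sum[OF pm_linear_circW] pm_linear_smultp[OF pm_linear_circW]
        smultp_sum_right)
  finally have expand: "(D ^^ k) (Poly_Mapping.single (a # w) 1) = ?split + C a ?rest"
    by (simp add: prepend_Con_sum)
  show ?case
  proof (cases "w = []")
    case True
    have "C a ?rest = 0"
      using True by (simp add: Rset_0 Con_def circW_Nil embedc_single[OF hom] smultp_single
          pm_linear_smultp[OF pm_linear_circW])
    thus ?thesis using expand True by (simp add: Rset_0 Rset_1 split_first_def)
  next
    case False
    have "Rset (Suc ?n) = split_first ` Rset ?n \<union> join_first ` Rset ?n"
      using False by (simp add: Rset_Suc)
    hence "(\<Sum>r\<in>Rset (Suc ?n). smultp (Dcoeff \<alpha> k (Suc ?n) r) (embedc \<iota> (Con circ r (a # w)))) = ?split + ?join"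
      by (simp add: sum.union_disjoint finite_Rset split_join_disjoint)
    thus ?thesis using expand circW_Con_sum[OF False] by simp
  qed
qed

lemma Dpow_word_vanish: "length w < k \<Longrightarrow> (D ^^ k) (Poly_Mapping.single w 1) = 0"
  by (simp add: Dpow_word Dcoeff_vanish)


section \<open>The logarithm of \<open>S\<^sup>\<alpha>\<close>\<close>

lemma finite_log_terms: "finite (log_terms S x)"
proof -
  define N where "N = Max (insert 0 (length ` Poly_Mapping.keys x))"
  have "(D ^^ k) x = 0" if k: "N < k" for k
  proof -
    have "length u < k" if "u \<in> Poly_Mapping.keys x" for u
      using that k unfolding N_def by (meson Max_ge finite_imageI finite_insert finite_keys
          image_eqI insertCI le_less_trans)
    have "(D ^^ k) x = linext (\<lambda>u. (D ^^ k) (Poly_Mapping.single u 1)) x"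
      by (rule pm_linear_expand[OF pm_linear_funpow[OF pm_linear_D]])
    thus ?thesis using \<open>\<And>u. u \<in> Poly_Mapping.keys x \<Longrightarrow> length u < k\<close>
      by (simp add: linext_def Dpow_word_vanish)
  qed
  hence "k \<le> N" if "k \<in> log_terms S x" for k
    using that by (cases "N < k") (auto simp: log_terms_def)
  hence "log_terms S x \<subseteq> {..N}" by blast
  thus ?thesis by (rule finite_subset) simp
qed

lemma logop_word_truncate:
  "logop S (Poly_Mapping.single w 1)
   = (\<Sum>k\<in>{1..length w}. smultp ((-1) ^ (k - 1) * ninv k) ((D ^^ k) (Poly_Mapping.single w 1)))"
proof -
  have "log_terms S (Poly_Mapping.single w 1) \<subseteq> {1..length w}"
    using Dpow_word_vanish[of w] by (force simp: log_terms_def not_less[symmetric])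
  thus ?thesis unfolding logop_def
    by (intro sum.mono_neutral_left) (auto simp: log_terms_def)
qed

lemma logop_word:
  assumes Q: "\<And>n::nat. 0 < n \<Longrightarrow> \<exists>y::'b. of_nat n * y = 1"
  shows "logop S (Poly_Mapping.single w 1)
    = (\<Sum>r\<in>{r\<in>Rset (length w). sigma (length w) r = 1}. smultp \<alpha> (embedc \<iota> (Con circ r w)))"
proof -
  let ?n = "length w"
  let ?E = "\<lambda>r. embedc \<iota> (Con circ r w)"
  let ?log_coeff = "\<lambda>r. (\<Sum>k\<in>{1..?n}. (-1) ^ (k - 1) * ninv k * of_nat (surj_count k (sigma ?n r)) :: 'b)"
  have "logop S (Poly_Mapping.single w 1)
      = (\<Sum>k\<in>{1..?n}. \<Sum>r\<in>Rset ?n. smultp ((-1) ^ (k - 1) * ninv k * Dcoeff \<alpha> k ?n r) (?E r))"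
    by (simp add: logop_word_truncate Dpow_word smultp_sum_right)
  also have "\<dots> = (\<Sum>r\<in>Rset ?n. smultp (\<alpha> ^ sigma ?n r * ?log_coeff r) (?E r))"
    by (subst sum.swap) (simp add: smultp_sum_left[symmetric] sum_distrib_left Dcoeff_def algebra_simps)
  also have "\<dots> = (\<Sum>r\<in>Rset ?n. if sigma ?n r = 1 then smultp \<alpha> (?E r) else 0)"
  proof (rule sum.cong[OF refl])
    fix r
    have "?log_coeff r = (if sigma ?n r = 1 then 1 else 0)"
      by (rule log_surj_count_sum[OF Q sigma_le])
    thus "smultp (\<alpha> ^ sigma ?n r * ?log_coeff r) (?E r)
        = (if sigma ?n r = 1 then smultp \<alpha> (?E r) else 0)"
      by (simp only:) simp
  qed
  also have "\<dots> = (\<Sum>r\<in>{r\<in>Rset ?n. sigma ?n r = 1}. smultp \<alpha> (?E r))"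
    by (simp add: sum.inter_filter finite_Rset)
  finally show ?thesis .
qed

end


lemma Qalg_poly:
  assumes "\<And>n::nat. 0 < n \<Longrightarrow> \<exists>y::'r::comm_ring_1. of_nat n * y = 1" and "0 < n"
  shows "\<exists>y::'r poly. of_nat n * y = 1"
proof -
  obtain y :: 'r where y: "of_nat n * y = 1" using assms by blast
  have "of_nat n * [:y:] = [:of_nat n * y:]" by (simp add: of_nat_poly)
  also have "\<dots> = 1" using y by (simp add: one_pCons)
  finally show ?thesis by blast
qed

theorem proposition3p3:
  fixes circ :: "'a \<Rightarrow> 'a \<Rightarrow> ('a \<Rightarrow>\<^sub>0 'r::comm_ring_1)"
  assumes Qalg: "\<And>n::nat. 0 < n \<Longrightarrow> \<exists>y::'r. of_nat n * y = 1"
    and comm: "\<And>a b. circ a b = circ b a"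
    and assoc: "\<And>a b c. circZ circ (circ a b) (Poly_Mapping.single c 1)
                        = circZ circ (Poly_Mapping.single a 1) (circ b c)"
  shows "(\<forall>x. finite (log_terms (Sop circ (\<lambda>r. [:r:]) [:0, 1:]) x))
    \<and> (\<forall>w. logop (Sop circ (\<lambda>r. [:r:]) [:0, 1:]) (Poly_Mapping.single w 1)
            = smultp [:0, 1:] (embedc (\<lambda>r. [:r:])
                 (\<Sum>r\<in>{r \<in> Rset (length w). sigma (length w) r = 1}. Con circ r w))
        \<and> logop (Sop circ (\<lambda>r. [:r:]) [:0, 1:]) (Poly_Mapping.single w 1)
            = smultp [:0, 1:] (embedc (\<lambda>r. [:r:]) (logop (Sop circ id 1) (Poly_Mapping.single w 1))))"
proof -
  interpret poly: S_alpha_setting circ "\<lambda>r. [:r:]" "[:0, 1:]"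
    by unfold_locales (fact rhom_const_poly, fact assoc)
  interpret plain: S_alpha_setting circ id 1
    by unfold_locales (fact rhom_id, fact assoc)
  let ?con_sum = "\<lambda>w. \<Sum>r\<in>{r \<in> Rset (length w). sigma (length w) r = 1}. Con circ r w"
  have log_t: "logop (Sop circ (\<lambda>r. [:r:]) [:0, 1:]) (Poly_Mapping.single w 1)
      = smultp [:0, 1:] (embedc (\<lambda>r. [:r:]) (?con_sum w))" for w
    by (simp add: poly.logop_word[OF Qalg_poly[OF Qalg]] embedc_sum[OF rhom_const_poly]
        smultp_sum_right)
  have log_1: "logop (Sop circ id 1) (Poly_Mapping.single w 1) = ?con_sum w" for w
    by (simp add: plain.logop_word[OF Qalg])
  show ?thesis
    using poly.finite_log_terms log_t log_1 by simp
qed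

end
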